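(* Let $\mathbb{P}_\omega$ be a centred least-squares problem with $r<n$ in simplified form. If $\mathbb{P}_\omega$ admits an essentially perfect solution, then $B$ is indefinite (has both a positive and a negative eigenvalue).
   Context: For real symmetric $n\times n$ $A\neq O$ (positive semidefinite) and $B$, $t,b\in\mathbb{R}^n$, $k\in\mathbb{R}$, problem $\mathbb{P}_\omega$ minimises $L(x)=(x-t)^\top A(x-t)$ over the nonempty set $X=\{x:x^\top Bx+2b^\top x-k=0\}$, with $\underline L=\inf_XL$. Centred least-squares with $r<n$: $t=0$, $A=\operatorname{diag}(I_r,O_{n-r})$, $1\le r<n$. Simplified form: for some $0\le s_0\le n-r$ and nonsingular diagonal $s_0\times s_0$ $\Gamma_0$, $B=\begin{pmatrix}B_{11}&C_{10}&O\\C_{10}^\top&O_{n-r-s_0}&O\\O&O&\Gamma_0\end{pmatrix}$ (block sizes $r,n-r-s_0,s_0$; empty blocks absent). $\mathbb{P}_\omega$ admits an essentially perfect solution if $L(x)>0$ for all $x\in X$ but $\underline L=0$. *)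

theory Defs
  imports Complex_Main "Jordan_Normal_Form.Char_Poly"
begin

definition objL :: "real mat \<Rightarrow> real vec \<Rightarrow> real vec \<Rightarrow> real" where
  "objL A t x = (x - t) \<bullet> (A *\<^sub>v (x - t))"

definition feasX :: "nat \<Rightarrow> real mat \<Rightarrow> real vec \<Rightarrow> real \<Rightarrow> real vec set" where
  "feasX n B b k = {x \<in> carrier_vec n. x \<bullet> (B *\<^sub>v x) + 2 * (b \<bullet> x) - k = 0}"

definition ess_perfect :: "nat \<Rightarrow> real mat \<Rightarrow> real vec \<Rightarrow> real mat \<Rightarrow> real vec \<Rightarrow> real \<Rightarrow> bool" where
  "ess_perfect n A t B b k \<longleftrightarrow>
     (\<forall>x \<in> feasX n B b k. objL A t x > 0) \<and> Inf (objL A t ` feasX n B b k) = 0"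

definition lsqA :: "nat \<Rightarrow> nat \<Rightarrow> real mat" where
  "lsqA n r = mat n n (\<lambda>(i, j). if i = j \<and> i < r then 1 else 0)"

text \<open>Simplified form of B with block sizes r, n-r-s0, s0.\<close>
definition simplified_form :: "nat \<Rightarrow> nat \<Rightarrow> nat \<Rightarrow> real mat \<Rightarrow> bool" where
  "simplified_form n r s0 B \<longleftrightarrow>
     s0 \<le> n - r \<and>
     (\<forall>i<n. \<forall>j<n. r \<le> i \<and> i < n - s0 \<and> r \<le> j \<and> j < n - s0 \<longrightarrow> B $$ (i, j) = 0) \<and>
     (\<forall>i<n. \<forall>j<n. i < n - s0 \<and> n - s0 \<le> j \<longrightarrow> B $$ (i, j) = 0) \<and>
     (\<forall>i<n. \<forall>j<n. n - s0 \<le> i \<and> j < n - s0 \<longrightarrow> B $$ (i, j) = 0) \<and>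
     (\<forall>i<n. \<forall>j<n. n - s0 \<le> i \<and> n - s0 \<le> j \<and> i \<noteq> j \<longrightarrow> B $$ (i, j) = 0) \<and>
     (\<forall>i<n. n - s0 \<le> i \<longrightarrow> B $$ (i, i) \<noteq> 0)"

end

theory Submission
  imports Defs "HOL-Analysis.Function_Topology"
begin

text \<open>Write \<open>x = (y, z)\<close> with \<open>y\<close> the first \<open>r\<close> coordinates, so that \<open>L x = |y|\<^sup>2\<close>. If the block
  \<open>C\<^sub>1\<^sub>0\<close> vanishes, the constraint splits as \<open>q(y) + H(z) = 0\<close> with \<open>q(y) = O(|y|)\<close> for small
  \<open>y\<close>. Completing squares in the diagonal block \<open>\<Gamma>\<^sub>0\<close> shows that \<open>H\<close> either vanishes somewhere, giving a
  feasible point with \<open>L = 0\<close>, or is bounded away from zero, which bounds \<open>|y|\<close> below on the feasible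
  set; neither is compatible with an essentially perfect solution. So some \<open>B i j \<noteq> 0\<close> with \<open>i\<close> a
  head and \<open>j\<close> a middle index, where \<open>B j j = 0\<close>; the form of \<open>B\<close> is then indefinite on the plane of
  these two coordinates, and maximising it (or its negative) over the unit ball produces a positive
  (negative) eigenvalue.\<close>

text \<open>Quadratic forms are handled on coefficient functions \<open>nat \<Rightarrow> real\<close>, of which only the first \<open>n\<close>
  values matter; this avoids dimension bookkeeping when splitting coordinates.\<close>

definition quad_form :: "nat \<Rightarrow> (nat \<Rightarrow> nat \<Rightarrow> real) \<Rightarrow> (nat \<Rightarrow> real) \<Rightarrow> real" where
  "quad_form n m f = (\<Sum>i<n. \<Sum>j<n. f i * m i j * f j)"

lemma quad_form_scalar_prod:
  assumes "B \<in> carrier_mat n n" "x \<in> carrier_vec n"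
  shows "x \<bullet> (B *\<^sub>v x) = quad_form n (\<lambda>i j. B $$ (i, j)) (\<lambda>i. x $ i)"
proof -
  have "x \<bullet> (B *\<^sub>v x) = (\<Sum>i<n. x $ i * (\<Sum>j<n. B $$ (i, j) * x $ j))"
    using assms by (simp add: scalar_prod_def atLeast0LessThan row_def)
  then show ?thesis
    unfolding quad_form_def by (simp add: sum_distrib_left mult.assoc)
qed

lemma quad_form_cong: "(\<And>i. i < n \<Longrightarrow> f i = g i) \<Longrightarrow> quad_form n m f = quad_form n m g"
  unfolding quad_form_def by simp

lemma quad_form_zero [simp]: "quad_form n m (\<lambda>_. 0) = 0"
  unfolding quad_form_def by simp

lemma quad_form_scale: "quad_form n m (\<lambda>i. a * f i) = a\<^sup>2 * quad_form n m f"
  unfolding quad_form_def by (simp add: sum_distrib_left power2_eq_square algebra_simps)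

lemma quad_form_uminus_coeffs: "quad_form n (\<lambda>i j. - m i j) f = - quad_form n m f"
  unfolding quad_form_def by (simp add: sum_negf)

lemma quad_form_eq_row_sums: "quad_form n m f = (\<Sum>i<n. f i * (\<Sum>j<n. m i j * f j))"
  unfolding quad_form_def by (simp add: sum_distrib_left mult.assoc)

lemma quad_form_add_scaled:
  assumes sym: "\<And>i j. i < n \<Longrightarrow> j < n \<Longrightarrow> m i j = m j i"
  shows "quad_form n m (\<lambda>i. v i + s * w i) =
    quad_form n m v + 2 * s * (\<Sum>i<n. w i * (\<Sum>j<n. m i j * v j)) + s\<^sup>2 * quad_form n m w"
proof -
  have swap: "(\<Sum>i<n. \<Sum>j<n. v i * m i j * w j) = (\<Sum>i<n. \<Sum>j<n. w i * m i j * v j)"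
    by (subst sum.swap) (auto intro!: sum.cong simp: sym)
  have "quad_form n m (\<lambda>i. v i + s * w i) =
      quad_form n m v + s * (\<Sum>i<n. \<Sum>j<n. v i * m i j * w j)
        + s * (\<Sum>i<n. \<Sum>j<n. w i * m i j * v j) + s\<^sup>2 * quad_form n m w"
    unfolding quad_form_def
    by (simp add: sum.distrib sum_distrib_left algebra_simps power2_eq_square)
  also have "\<dots> = quad_form n m v + 2 * s * (\<Sum>i<n. \<Sum>j<n. w i * m i j * v j) + s\<^sup>2 * quad_form n m w"
    by (simp add: swap)
  finally show ?thesis
    by (simp add: sum_distrib_left mult.assoc)
qed

text \<open>Otherwise moving a little along the image direction would make the form negative.\<close>

lemma psd_quad_form_zero_imp_kernel:
  assumes sym: "\<And>i j. i < n \<Longrightarrow> j < n \<Longrightarrow> m i j = m j i"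
    and psd: "\<And>f. 0 \<le> quad_form n m f"
    and zero: "quad_form n m v = 0"
    and "i < n"
  shows "(\<Sum>j<n. m i j * v j) = 0"
proof -
  define w where "w i = (\<Sum>j<n. m i j * v j)" for i
  define N where "N = (\<Sum>i<n. (w i)\<^sup>2)"
  define c where "c = quad_form n m w"
  have c0: "c \<ge> 0" using psd c_def by simp
  have N0: "N \<ge> 0" unfolding N_def by (simp add: sum_nonneg)
  have along: "0 \<le> t\<^sup>2 * c - 2 * t * N" for t
    using psd[of "\<lambda>i. v i + (- t) * w i"] quad_form_add_scaled[of n m v "- t" w, OF sym] zero
    by (simp add: N_def c_def power2_eq_square w_def)
  have "N = 0"
  proof (rule ccontr)
    assume "N \<noteq> 0"
    with N0 have "N > 0" by simp
    define t where "t = N / (c + 1)"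
    have "t > 0" using \<open>N > 0\<close> c0 t_def by simp
    moreover have "0 \<le> t * (t * c - 2 * N)"
      using along[of t] by (simp add: power2_eq_square algebra_simps)
    ultimately have "2 * N \<le> t * c" by (simp add: zero_le_mult_iff)
    moreover have "t * c \<le> N" unfolding t_def using \<open>N > 0\<close> c0 by (simp add: field_simps)
    ultimately show False using \<open>N > 0\<close> by linarith
  qed
  then have "\<forall>i\<in>{..<n}. (w i)\<^sup>2 = 0"
    unfolding N_def by (subst sum_nonneg_eq_0_iff[symmetric]) auto
  then show ?thesis using \<open>i < n\<close> unfolding w_def by simp
qed

lemma compact_coord_unit_ball:
  "compact {f :: nat \<Rightarrow> real. (\<forall>i\<ge>n. f i = 0) \<and> (\<Sum>i<n. (f i)\<^sup>2) \<le> 1}"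
proof -
  define S :: "(nat \<Rightarrow> real) set" where "S = PiE UNIV (\<lambda>i. if i < n then {-1..1} else {0})"
  have "compactin (product_topology (\<lambda>i. euclidean) UNIV) S"
    unfolding S_def by (subst compactin_PiE) (auto simp: compactin_euclidean_iff)
  then have "compact S" by (simp add: euclidean_product_topology compactin_euclidean_iff)
  moreover have "closed {f :: nat \<Rightarrow> real. (\<Sum>i<n. (f i)\<^sup>2) \<le> 1}"
    by (intro closed_Collect_le continuous_intros) auto
  moreover have "{f. (\<forall>i\<ge>n. f i = 0) \<and> (\<Sum>i<n. (f i)\<^sup>2) \<le> 1} = S \<inter> {f. (\<Sum>i<n. (f i)\<^sup>2) \<le> 1}"
  proof -
    have "\<bar>f i\<bar> \<le> 1" if "(\<Sum>i<n. (f i)\<^sup>2) \<le> 1" "i < n" for f :: "nat \<Rightarrow> real" and i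
    proof -
      have "(f i)\<^sup>2 \<le> (\<Sum>i<n. (f i)\<^sup>2)"
        by (rule member_le_sum) (use that in auto)
      with that(1) show ?thesis by (metis abs_square_le_1 order_trans)
    qed
    then show ?thesis unfolding S_def
      by (auto simp: PiE_iff not_less abs_le_iff) (metis not_less singletonD)
  qed
  ultimately show ?thesis using compact_Int_closed by simp
qed

lemma quad_form_max_on_unit_ball:
  "\<exists>v. (\<Sum>i<n. (v i)\<^sup>2) \<le> 1 \<and> (\<forall>f. quad_form n m f \<le> quad_form n m v * (\<Sum>i<n. (f i)\<^sup>2))"
proof -
  define N where "N f = (\<Sum>i<n. (f i)\<^sup>2)" for f :: "nat \<Rightarrow> real"
  define K where "K = {f :: nat \<Rightarrow> real. (\<forall>i\<ge>n. f i = 0) \<and> N f \<le> 1}"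
  have "compact K" "(\<lambda>_. 0) \<in> K"
    using compact_coord_unit_ball[of n] unfolding K_def N_def by auto
  have "continuous_on UNIV (\<lambda>f :: nat \<Rightarrow> real. f i)" for i
    by simp
  then have "continuous_on UNIV (quad_form n m)"
    unfolding quad_form_def by (intro continuous_intros)
  then have "continuous_on K (quad_form n m)"
    by (rule continuous_on_subset) simp
  then obtain v where "v \<in> K" and vmax: "\<And>f. f \<in> K \<Longrightarrow> quad_form n m f \<le> quad_form n m v"
    using continuous_attains_sup[OF \<open>compact K\<close>] \<open>(\<lambda>_. 0) \<in> K\<close> by blast
  have "quad_form n m f \<le> quad_form n m v * N f" for f
  proof (cases "N f = 0")
    case True
    then have "\<forall>i\<in>{..<n}. (f i)\<^sup>2 = 0"
      unfolding N_def by (subst sum_nonneg_eq_0_iff[symmetric]) auto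
    then have "quad_form n m f = 0"
      using quad_form_cong[of n f "\<lambda>_. 0" m] by simp
    then show ?thesis using True by simp
  next
    case False
    moreover have "N f \<ge> 0" unfolding N_def by (simp add: sum_nonneg)
    ultimately have Npos: "N f > 0" by simp
    define g where "g i = (if i < n then f i / sqrt (N f) else 0)" for i
    have "N g = N f / (sqrt (N f))\<^sup>2"
      unfolding N_def g_def by (simp add: power_divide sum_divide_distrib)
    with Npos have "g \<in> K" unfolding K_def g_def by simp
    then have "quad_form n m g \<le> quad_form n m v" by (rule vmax)
    moreover have "quad_form n m g = (1 / sqrt (N f))\<^sup>2 * quad_form n m f"
      by (subst quad_form_scale[symmetric]) (rule quad_form_cong, simp add: g_def)
    ultimately show ?thesis using Npos by (simp add: field_simps)
  qed
  moreover have "N v \<le> 1" using \<open>v \<in> K\<close> K_def by simp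
  ultimately show ?thesis unfolding N_def by blast
qed

text \<open>Rayleigh: the maximum \<open>lam\<close> of the form on the unit ball is positive, and \<open>lam I - m\<close> is
  positive semidefinite and vanishes on the maximiser.\<close>

lemma pos_eigen_of_quad_form_pos:
  assumes sym: "\<And>i j. i < n \<Longrightarrow> j < n \<Longrightarrow> m i j = m j i"
    and pos: "quad_form n m u > 0"
  shows "\<exists>lam>0. \<exists>v. (\<exists>i<n. v i \<noteq> 0) \<and> (\<forall>i<n. (\<Sum>j<n. m i j * v j) = lam * v i)"
proof -
  define N where "N f = (\<Sum>i<n. (f i)\<^sup>2)" for f :: "nat \<Rightarrow> real"
  obtain v where Nv: "N v \<le> 1" and bound: "\<And>f. quad_form n m f \<le> quad_form n m v * N f"
    using quad_form_max_on_unit_ball unfolding N_def by blast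
  define lam where "lam = quad_form n m v"
  have N0: "N f \<ge> 0" for f unfolding N_def by (simp add: sum_nonneg)
  have "0 < lam * N u" using bound[of u] pos unfolding lam_def by linarith
  with N0[of u] have lam_pos: "lam > 0" by (simp add: zero_less_mult_iff)
  define M where "M i j = (if i = j then lam else 0) - m i j" for i j
  have rowM: "(\<Sum>j<n. M i j * f j) = lam * f i - (\<Sum>j<n. m i j * f j)" if "i < n" for i f
  proof -
    have "(\<Sum>j<n. M i j * f j) = (\<Sum>j<n. (if i = j then lam * f j else 0) - m i j * f j)"
      by (intro sum.cong refl) (simp add: M_def algebra_simps)
    also have "\<dots> = (\<Sum>j<n. (if i = j then lam * f j else 0)) - (\<Sum>j<n. m i j * f j)"
      by (rule sum_subtractf)
    finally show ?thesis using that by simp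
  qed
  have qfM: "quad_form n M f = lam * N f - quad_form n m f" for f
  proof -
    have "quad_form n M f = (\<Sum>i<n. lam * (f i)\<^sup>2 - f i * (\<Sum>j<n. m i j * f j))"
      unfolding quad_form_eq_row_sums
      by (intro sum.cong refl) (simp only: lessThan_iff rowM, simp add: power2_eq_square algebra_simps)
    then show ?thesis
      unfolding N_def quad_form_eq_row_sums[of n m] by (simp add: sum_subtractf sum_distrib_left)
  qed
  have psd: "0 \<le> quad_form n M f" for f
    using bound[of f] qfM[of f] lam_def by simp
  have "quad_form n M v \<le> 0" using qfM[of v] lam_pos Nv lam_def by (simp add: mult_le_cancel_left1)
  with psd[of v] have Mv0: "quad_form n M v = 0" by linarith
  have "(\<Sum>j<n. M i j * v j) = 0" if "i < n" for i
    by (rule psd_quad_form_zero_imp_kernel[OF _ psd Mv0 that]) (auto simp: M_def sym)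
  then have eigen: "\<forall>i<n. (\<Sum>j<n. m i j * v j) = lam * v i" by (simp add: rowM)
  have "\<exists>i<n. v i \<noteq> 0"
  proof (rule ccontr)
    assume "\<not> ?thesis"
    then have "quad_form n m v = 0" using quad_form_cong[of n v "\<lambda>_. 0" m] by simp
    then show False using lam_pos lam_def by simp
  qed
  with eigen lam_pos show ?thesis by blast
qed

lemma eigenvalueI_coeffs:
  assumes B: "B \<in> carrier_mat n n" and "i < n" "v i \<noteq> 0"
    and eigen: "\<And>i. i < n \<Longrightarrow> (\<Sum>j<n. B $$ (i, j) * v j) = lam * v i"
  shows "eigenvalue B lam"
proof -
  have "vec n v \<noteq> 0\<^sub>v n" using assms(2,3) by (metis index_vec index_zero_vec(1))
  moreover have "B *\<^sub>v vec n v = lam \<cdot>\<^sub>v vec n v"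
    using B eigen by (intro eq_vecI) (auto simp: scalar_prod_def atLeast0LessThan row_def)
  ultimately show ?thesis
    unfolding eigenvalue_def eigenvector_def using B by (intro exI[of _ "vec n v"]) simp
qed

lemma pos_eigenvalue_if_quad_form_pos:
  assumes B: "B \<in> carrier_mat n n"
    and sym: "\<And>i j. i < n \<Longrightarrow> j < n \<Longrightarrow> B $$ (i, j) = B $$ (j, i)"
    and "quad_form n (\<lambda>i j. B $$ (i, j)) u > 0"
  shows "\<exists>p>0. eigenvalue B p"
proof -
  obtain lam v i where "lam > 0" "i < n" "v i \<noteq> 0"
    and "\<forall>i<n. (\<Sum>j<n. B $$ (i, j) * v j) = lam * v i"
    using pos_eigen_of_quad_form_pos[OF sym assms(3)] by blast
  then show ?thesis using eigenvalueI_coeffs[OF B] by blast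
qed

lemma neg_eigenvalue_if_quad_form_neg:
  assumes B: "B \<in> carrier_mat n n"
    and sym: "\<And>i j. i < n \<Longrightarrow> j < n \<Longrightarrow> B $$ (i, j) = B $$ (j, i)"
    and "quad_form n (\<lambda>i j. B $$ (i, j)) u < 0"
  shows "\<exists>q<0. eigenvalue B q"
proof -
  have pos: "quad_form n (\<lambda>i j. - B $$ (i, j)) u > 0"
    using assms(3) by (simp add: quad_form_uminus_coeffs)
  have sym_neg: "\<And>i j. i < n \<Longrightarrow> j < n \<Longrightarrow> - B $$ (i, j) = - B $$ (j, i)"
    using sym by simp
  obtain lam v i where "lam > 0" "i < n" "v i \<noteq> 0"
    and eigen: "\<forall>i<n. (\<Sum>j<n. - B $$ (i, j) * v j) = lam * v i"
    using pos_eigen_of_quad_form_pos[where m="\<lambda>i j. - B $$ (i, j)", OF sym_neg pos] by blast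
  have "(\<Sum>j<n. B $$ (i, j) * v j) = - lam * v i" if "i < n" for i
  proof -
    have "- (\<Sum>j<n. B $$ (i, j) * v j) = lam * v i"
      using eigen that by (simp add: sum_negf)
    then show ?thesis by simp
  qed
  then have "eigenvalue B (- lam)"
    by (rule eigenvalueI_coeffs[where v=v, OF B \<open>i < n\<close> \<open>v i \<noteq> 0\<close>])
  with \<open>lam > 0\<close> show ?thesis by (intro exI[of _ "- lam"]) simp
qed

lemma quad_form_single_coord:
  assumes "j < n"
  shows "quad_form n m (\<lambda>a. if a = j then t else 0) = t\<^sup>2 * m j j"
proof -
  have "quad_form n m (\<lambda>a. if a = j then t else 0) =
      (\<Sum>a<n. \<Sum>b<n. if b = j then (if a = j then t * m j j * t else 0) else 0)"
    unfolding quad_form_def by (intro sum.cong refl) auto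
  then show ?thesis using assms by (simp add: power2_eq_square)
qed

lemma quad_form_two_coords:
  assumes "i < n" "j < n" "i \<noteq> j"
  shows "quad_form n m (\<lambda>a. if a = i then t else if a = j then u else 0) =
    t * t * m i i + t * u * m i j + u * t * m j i + u * u * m j j"
proof -
  let ?f = "\<lambda>a. if a = i then t else if a = j then u else 0"
  have row: "(\<Sum>b<n. m a b * ?f b) = m a i * t + m a j * u" for a
  proof -
    have "(\<Sum>b<n. m a b * ?f b) =
        (\<Sum>b<n. (if b = i then m a i * t else 0) + (if b = j then m a j * u else 0))"
      by (intro sum.cong refl) (use assms in auto)
    then show ?thesis using assms by (simp add: sum.distrib)
  qed
  have "quad_form n m ?f =
      (\<Sum>a<n. (if a = i then t * (m i i * t + m i j * u) else 0)
        + (if a = j then u * (m j i * t + m j j * u) else 0))"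
    unfolding quad_form_eq_row_sums row by (intro sum.cong refl) (use assms in auto)
  then show ?thesis
    using assms by (simp add: sum.distrib algebra_simps)
qed

text \<open>On the plane of the coordinates \<open>i\<close> and \<open>j\<close> the form is \<open>t (t m\<^sub>i\<^sub>i + 2 m\<^sub>i\<^sub>j)\<close>, which takes both
  signs for small \<open>t\<close> of either sign.\<close>

lemma quad_form_indefinite_if_zero_diag:
  assumes sym: "\<And>i j. i < n \<Longrightarrow> j < n \<Longrightarrow> m i j = m j i"
    and "i < n" "j < n" "m j j = 0" "m i j \<noteq> 0"
  shows "(\<exists>u. quad_form n m u > 0) \<and> (\<exists>u. quad_form n m u < 0)"
proof -
  have "i \<noteq> j" using assms by auto
  define d where "d = \<bar>m i i\<bar> + 1"
  have d: "d > 0" "- 1 < m i i / d" "m i i / d < 1"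
    unfolding d_def by (auto simp: field_simps)
  define u where "u s a = (if a = i then s * m i j / d else if a = j then 1 else 0)" for s a
  have u_val: "quad_form n m (u s) = s * ((m i j)\<^sup>2 / d) * (s * (m i i / d) + 2)" for s
    unfolding u_def quad_form_two_coords[OF \<open>i < n\<close> \<open>j < n\<close> \<open>i \<noteq> j\<close>]
    using sym[of j i] assms(2-4) d(1) by (simp add: power2_eq_square field_simps)
  have "(m i j)\<^sup>2 / d > 0" using assms(5) d by simp
  with d have "(m i j)\<^sup>2 / d * (m i i / d + 2) > 0" "(m i j)\<^sup>2 / d * (2 - m i i / d) > 0"
    by (intro mult_pos_pos; linarith)+
  moreover have "quad_form n m (u 1) = (m i j)\<^sup>2 / d * (m i i / d + 2)"
    "quad_form n m (u (- 1)) = - ((m i j)\<^sup>2 / d * (2 - m i i / d))"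
    unfolding u_val by (simp_all add: algebra_simps)
  ultimately have "quad_form n m (u 1) > 0" "quad_form n m (u (- 1)) < 0" by simp_all
  then show ?thesis by blast
qed

definition quadric_val ::
    "nat \<Rightarrow> (nat \<Rightarrow> nat \<Rightarrow> real) \<Rightarrow> (nat \<Rightarrow> real) \<Rightarrow> real \<Rightarrow> (nat \<Rightarrow> real) \<Rightarrow> real" where
  "quadric_val n m c k f = quad_form n m f + 2 * (\<Sum>i<n. c i * f i) - k"

lemma quadric_val_split_head_tail:
  assumes cross: "\<And>i j. i < r \<Longrightarrow> r \<le> j \<Longrightarrow> j < n \<Longrightarrow> m i j = 0"
    and sym: "\<And>i j. i < n \<Longrightarrow> j < n \<Longrightarrow> m i j = m j i"
  shows "quadric_val n m c k f =
    quadric_val n m c 0 (\<lambda>i. if i < r then f i else 0) + quadric_val n m c k (\<lambda>i. if i < r then 0 else f i)"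
proof -
  have "f i * m i j * f j =
      (if i < r then f i else 0) * m i j * (if j < r then f j else 0)
      + (if i < r then 0 else f i) * m i j * (if j < r then 0 else f j)" if "i < n" "j < n" for i j
    using cross[of i j] cross[of j i] sym[OF that] that by auto
  then have "quad_form n m f =
      quad_form n m (\<lambda>i. if i < r then f i else 0) + quad_form n m (\<lambda>i. if i < r then 0 else f i)"
    unfolding quad_form_def by (simp add: sum.distrib)
  moreover have "(\<Sum>i<n. c i * f i) =
      (\<Sum>i<n. c i * (if i < r then f i else 0)) + (\<Sum>i<n. c i * (if i < r then 0 else f i))"
    by (simp add: sum.distrib[symmetric] if_distrib cong: if_cong)
  ultimately show ?thesis unfolding quadric_val_def by simp
qed

lemma abs_quadric_val_le:
  assumes y: "(\<Sum>i<n. (y i)\<^sup>2) \<le> \<eta>\<^sup>2" and "0 \<le> \<eta>" "\<eta> \<le> 1"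
  shows "\<bar>quadric_val n m c 0 y\<bar> \<le> ((\<Sum>i<n. \<Sum>j<n. \<bar>m i j\<bar>) + 2 * (\<Sum>i<n. \<bar>c i\<bar>)) * \<eta>"
proof -
  have yi: "\<bar>y i\<bar> \<le> \<eta>" if "i < n" for i
  proof -
    have "(y i)\<^sup>2 \<le> (\<Sum>i<n. (y i)\<^sup>2)" by (rule member_le_sum) (use that in auto)
    with y have "\<bar>y i\<bar>\<^sup>2 \<le> \<eta>\<^sup>2" by simp
    then show ?thesis using \<open>0 \<le> \<eta>\<close> by (rule power2_le_imp_le)
  qed
  have entry: "\<bar>y i * m i j * y j\<bar> \<le> \<bar>m i j\<bar> * \<eta>" if "i < n" "j < n" for i j
  proof -
    have "\<bar>y i\<bar> * \<bar>y j\<bar> \<le> \<eta> * 1"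
      using yi[OF that(1)] yi[OF that(2)] \<open>\<eta> \<le> 1\<close> \<open>0 \<le> \<eta>\<close> by (intro mult_mono) auto
    then have "\<bar>m i j\<bar> * (\<bar>y i\<bar> * \<bar>y j\<bar>) \<le> \<bar>m i j\<bar> * \<eta>"
      by (simp add: mult_left_mono)
    then show ?thesis by (simp add: abs_mult algebra_simps)
  qed
  have "\<bar>quad_form n m y\<bar> \<le> (\<Sum>i<n. \<Sum>j<n. \<bar>y i * m i j * y j\<bar>)"
    unfolding quad_form_def by (rule order_trans[OF sum_abs sum_mono]) (rule sum_abs)
  also have "\<dots> \<le> (\<Sum>i<n. \<Sum>j<n. \<bar>m i j\<bar> * \<eta>)"
    by (intro sum_mono entry) auto
  finally have quad: "\<bar>quad_form n m y\<bar> \<le> (\<Sum>i<n. \<Sum>j<n. \<bar>m i j\<bar>) * \<eta>"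
    by (simp add: sum_distrib_right)
  have "\<bar>\<Sum>i<n. c i * y i\<bar> \<le> (\<Sum>i<n. \<bar>c i\<bar> * \<eta>)"
    by (rule order_trans[OF sum_abs sum_mono]) (simp add: abs_mult mult_left_mono yi)
  then have lin: "\<bar>\<Sum>i<n. c i * y i\<bar> \<le> (\<Sum>i<n. \<bar>c i\<bar>) * \<eta>"
    by (simp add: sum_distrib_right)
  have "\<bar>quadric_val n m c 0 y\<bar> \<le> \<bar>quad_form n m y\<bar> + 2 * \<bar>\<Sum>i<n. c i * y i\<bar>"
    unfolding quadric_val_def using abs_triangle_ineq[of "quad_form n m y" "2 * (\<Sum>i<n. c i * y i)"]
    by (simp add: abs_mult)
  also have "\<dots> \<le> (\<Sum>i<n. \<Sum>j<n. \<bar>m i j\<bar>) * \<eta> + 2 * ((\<Sum>i<n. \<bar>c i\<bar>) * \<eta>)"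
    using quad lin by linarith
  finally show ?thesis by (simp add: algebra_simps)
qed

text \<open>The uncoupled quadric splits into a head part, of size \<open>O(|y|)\<close> for a small head \<open>y\<close>, and a tail
  part that stays at distance \<open>\<delta>\<close> from zero.\<close>

lemma quadric_head_bounded_below:
  assumes "r \<le> n"
    and cross: "\<And>i j. i < r \<Longrightarrow> r \<le> j \<Longrightarrow> j < n \<Longrightarrow> m i j = 0"
    and sym: "\<And>i j. i < n \<Longrightarrow> j < n \<Longrightarrow> m i j = m j i"
    and "\<delta> > 0" and tail: "\<And>z. \<forall>i<r. z i = 0 \<Longrightarrow> \<delta> \<le> \<bar>quadric_val n m c k z\<bar>"
  shows "\<exists>\<epsilon>>0. \<forall>f. quadric_val n m c k f = 0 \<longrightarrow> \<epsilon> \<le> (\<Sum>i<r. (f i)\<^sup>2)"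
proof -
  define K where "K = (\<Sum>i<n. \<Sum>j<n. \<bar>m i j\<bar>) + 2 * (\<Sum>i<n. \<bar>c i\<bar>)"
  have "K \<ge> 0" unfolding K_def by (simp add: sum_nonneg)
  define \<epsilon> where "\<epsilon> = min 1 ((\<delta> / (K + 1))\<^sup>2)"
  have "\<epsilon> > 0" unfolding \<epsilon>_def using \<open>\<delta> > 0\<close> \<open>K \<ge> 0\<close> by simp
  moreover have "\<epsilon> \<le> (\<Sum>i<r. (f i)\<^sup>2)" if "quadric_val n m c k f = 0" for f
  proof (rule ccontr)
    assume small: "\<not> ?thesis"
    define y where "y i = (if i < r then f i else 0)" for i
    define \<eta> where "\<eta> = sqrt (\<Sum>i<r. (f i)\<^sup>2)"
    have "(\<Sum>i<n. (y i)\<^sup>2) = (\<Sum>i<r. (y i)\<^sup>2)"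
      using \<open>r \<le> n\<close> by (intro sum.mono_neutral_right) (auto simp: y_def)
    also have "\<dots> = (\<Sum>i<r. (f i)\<^sup>2)" by (simp add: y_def)
    finally have "(\<Sum>i<n. (y i)\<^sup>2) = (\<Sum>i<r. (f i)\<^sup>2)" .
    then have y\<eta>: "(\<Sum>i<n. (y i)\<^sup>2) \<le> \<eta>\<^sup>2" and "0 \<le> \<eta>"
      unfolding \<eta>_def by (simp_all add: sum_nonneg)
    have "\<eta>\<^sup>2 < \<epsilon>" using small unfolding \<eta>_def by (simp add: sum_nonneg)
    then have "\<eta>\<^sup>2 < 1\<^sup>2" and \<eta>_K: "\<eta>\<^sup>2 < (\<delta> / (K + 1))\<^sup>2" unfolding \<epsilon>_def by auto
    then have "\<eta> \<le> 1" using power2_less_imp_less[of \<eta> 1] by simp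
    have "\<eta> < \<delta> / (K + 1)"
      using power2_less_imp_less[OF \<eta>_K] \<open>\<delta> > 0\<close> \<open>K \<ge> 0\<close> by simp
    have "\<delta> \<le> \<bar>quadric_val n m c k (\<lambda>i. if i < r then 0 else f i)\<bar>" by (rule tail) simp
    also have "\<dots> = \<bar>quadric_val n m c 0 y\<bar>"
      using that quadric_val_split_head_tail[OF cross sym, where c=c and k=k and f=f]
      unfolding y_def by simp
    also have "\<dots> \<le> K * \<eta>"
      unfolding K_def by (rule abs_quadric_val_le[OF y\<eta> \<open>0 \<le> \<eta>\<close> \<open>\<eta> \<le> 1\<close>])
    also have "\<dots> \<le> K * (\<delta> / (K + 1))"
      using \<open>\<eta> < \<delta> / (K + 1)\<close> \<open>K \<ge> 0\<close> by (intro mult_left_mono) auto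
    also have "\<dots> < \<delta>" using \<open>K \<ge> 0\<close> \<open>\<delta> > 0\<close> by (simp add: field_simps)
    finally show False by simp
  qed
  ultimately show ?thesis by blast
qed

text \<open>The equation is solvable on a single axis unless every \<open>g i\<close> has the sign opposite to \<open>M\<close>,
  in which case the sum has sign opposite to \<open>M\<close> too.\<close>

lemma diag_quadric_dichotomy:
  fixes g a :: "nat \<Rightarrow> real"
  assumes "finite I"
  shows "(\<exists>z. (\<forall>i. i \<notin> I \<longrightarrow> z i = 0) \<and> (\<Sum>i\<in>I. g i * (z i + a i)\<^sup>2) = M) \<or>
    (\<exists>\<delta>>0. \<forall>z. \<delta> \<le> \<bar>(\<Sum>i\<in>I. g i * (z i + a i)\<^sup>2) - M\<bar>)"
proof (cases "\<exists>q. (q \<in> I \<and> g q * M > 0) \<or> M = 0")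
  case True
  then obtain q where "q \<in> I \<or> M = 0" "M = 0 \<or> g q * M > 0" by blast
  define s where "s = (if M = 0 then 0 else sqrt (M / g q))"
  have s: "g q * s\<^sup>2 = M"
    using \<open>M = 0 \<or> g q * M > 0\<close> unfolding s_def by (auto simp: zero_less_mult_iff zero_le_divide_iff)
  define z where "z i = (if i \<in> I then - a i + (if i = q then s else 0) else 0)" for i
  have "(\<Sum>i\<in>I. g i * (z i + a i)\<^sup>2) = (\<Sum>i\<in>I. if i = q then g q * s\<^sup>2 else 0)"
    unfolding z_def by (intro sum.cong) auto
  also have "\<dots> = M"
    using \<open>q \<in> I \<or> M = 0\<close> \<open>finite I\<close> s by auto
  finally have "(\<Sum>i\<in>I. g i * (z i + a i)\<^sup>2) = M" .
  moreover have "\<forall>i. i \<notin> I \<longrightarrow> z i = 0" by (simp add: z_def)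
  ultimately show ?thesis by blast
next
  case False
  then have "M \<noteq> 0" and opposite: "\<And>i. i \<in> I \<Longrightarrow> g i * M \<le> 0"
    by (simp_all add: not_less)
  have "\<bar>M\<bar> \<le> \<bar>(\<Sum>i\<in>I. g i * (z i + a i)\<^sup>2) - M\<bar>" for z
  proof -
    define S where "S = (\<Sum>i\<in>I. g i * (z i + a i)\<^sup>2)"
    have "M * S = (\<Sum>i\<in>I. (g i * M) * (z i + a i)\<^sup>2)"
      unfolding S_def sum_distrib_left by (simp add: mult_ac)
    also have "\<dots> \<le> 0"
      using opposite by (intro sum_nonpos) (simp add: mult_nonpos_nonneg)
    finally have "M * S \<le> 0" .
    moreover have "(S - M)\<^sup>2 = M\<^sup>2 - 2 * (M * S) + S\<^sup>2"
      by (simp add: power2_eq_square algebra_simps)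
    moreover have "0 \<le> S\<^sup>2" by simp
    ultimately have "M\<^sup>2 \<le> (S - M)\<^sup>2" by linarith
    then show ?thesis unfolding S_def using abs_le_square_iff by blast
  qed
  moreover have "\<bar>M\<bar> > 0" using \<open>M \<noteq> 0\<close> by simp
  ultimately show ?thesis by blast
qed

lemma sum_lessThan_if_ge: "(\<Sum>i<(n::nat). if p \<le> i then h i else 0) = (\<Sum>i\<in>{p..<n}. h i)"
proof -
  have "(\<Sum>i<n. if p \<le> i then h i else 0) = (\<Sum>i\<in>{p..<n}. if p \<le> i then h i else 0)"
    by (intro sum.mono_neutral_right) auto
  then show ?thesis by simp
qed

lemma quadric_val_tail_complete_square:
  assumes "r \<le> p"
    and mid: "\<And>i j. r \<le> i \<Longrightarrow> i < p \<Longrightarrow> r \<le> j \<Longrightarrow> j < p \<Longrightarrow> m i j = 0"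
    and mid_tail: "\<And>i j. i < p \<Longrightarrow> p \<le> j \<Longrightarrow> j < n \<Longrightarrow> m i j = 0"
    and tail_mid: "\<And>i j. p \<le> i \<Longrightarrow> i < n \<Longrightarrow> j < p \<Longrightarrow> m i j = 0"
    and tail_diag: "\<And>i j. p \<le> i \<Longrightarrow> i < n \<Longrightarrow> p \<le> j \<Longrightarrow> j < n \<Longrightarrow> i \<noteq> j \<Longrightarrow> m i j = 0"
    and tail_nonsing: "\<And>i. p \<le> i \<Longrightarrow> i < n \<Longrightarrow> m i i \<noteq> 0"
    and c_mid: "\<And>j. r \<le> j \<Longrightarrow> j < p \<Longrightarrow> c j = 0"
    and z_head: "\<forall>i<r. z i = 0"
  shows "quadric_val n m c k z =
    (\<Sum>i\<in>{p..<n}. m i i * (z i + c i / m i i)\<^sup>2) - (k + (\<Sum>i\<in>{p..<n}. (c i)\<^sup>2 / m i i))"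
proof -
  have entry: "z i * m i j * z j = (if j = i then (if p \<le> i then m i i * (z i)\<^sup>2 else 0) else 0)"
    if "i < n" "j < n" for i j
  proof (cases "i < r \<or> j < r")
    case True
    then show ?thesis using z_head mid[of i i] \<open>r \<le> p\<close> by (auto simp: power2_eq_square)
  next
    case False
    then show ?thesis
      using mid[of i j] mid_tail[of i j] tail_mid[of i j] tail_diag[of i j] that
      by (cases "i < p"; cases "j < p") (auto simp: power2_eq_square)
  qed
  have "(\<Sum>j<n. z i * m i j * z j) = (if p \<le> i then m i i * (z i)\<^sup>2 else 0)" if "i < n" for i
    using that by (simp add: entry)
  then have quad: "quad_form n m z = (\<Sum>i\<in>{p..<n}. m i i * (z i)\<^sup>2)"
    unfolding quad_form_def sum_lessThan_if_ge[symmetric] by simp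
  have lin: "(\<Sum>i<n. c i * z i) = (\<Sum>i\<in>{p..<n}. c i * z i)"
  proof -
    have cz: "c i * z i = (if p \<le> i then c i * z i else 0)" for i
      using z_head c_mid[of i] by (cases "i < r") auto
    then have "(\<Sum>i<n. c i * z i) = (\<Sum>i<n. if p \<le> i then c i * z i else 0)"
      by (intro sum.cong refl) (rule cz)
    then show ?thesis by (simp add: sum_lessThan_if_ge)
  qed
  have square: "m i i * (z i)\<^sup>2 + 2 * (c i * z i) = m i i * (z i + c i / m i i)\<^sup>2 - (c i)\<^sup>2 / m i i"
    if "i \<in> {p..<n}" for i
    using tail_nonsing[of i] that by (auto simp: field_simps power2_eq_square)
  have "quadric_val n m c k z = (\<Sum>i\<in>{p..<n}. m i i * (z i)\<^sup>2 + 2 * (c i * z i)) - k"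
    unfolding quadric_val_def quad lin by (simp add: sum.distrib sum_distrib_left)
  also have "\<dots> = (\<Sum>i\<in>{p..<n}. m i i * (z i + c i / m i i)\<^sup>2 - (c i)\<^sup>2 / m i i) - k"
    by (rule arg_cong[where f="\<lambda>s. s - k"], rule sum.cong[OF refl square])
  finally show ?thesis by (simp add: sum_subtractf)
qed

lemma quadric_val_tail_dichotomy:
  assumes "r \<le> p" "p \<le> n"
    and mid: "\<And>i j. r \<le> i \<Longrightarrow> i < p \<Longrightarrow> r \<le> j \<Longrightarrow> j < p \<Longrightarrow> m i j = 0"
    and mid_tail: "\<And>i j. i < p \<Longrightarrow> p \<le> j \<Longrightarrow> j < n \<Longrightarrow> m i j = 0"
    and tail_mid: "\<And>i j. p \<le> i \<Longrightarrow> i < n \<Longrightarrow> j < p \<Longrightarrow> m i j = 0"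
    and tail_diag: "\<And>i j. p \<le> i \<Longrightarrow> i < n \<Longrightarrow> p \<le> j \<Longrightarrow> j < n \<Longrightarrow> i \<noteq> j \<Longrightarrow> m i j = 0"
    and tail_nonsing: "\<And>i. p \<le> i \<Longrightarrow> i < n \<Longrightarrow> m i i \<noteq> 0"
  shows "(\<exists>z. (\<forall>i<r. z i = 0) \<and> quadric_val n m c k z = 0) \<or>
    (\<exists>\<delta>>0. \<forall>z. (\<forall>i<r. z i = 0) \<longrightarrow> \<delta> \<le> \<bar>quadric_val n m c k z\<bar>)"
proof (cases "\<exists>j. r \<le> j \<and> j < p \<and> c j \<noteq> 0")
  case True
  then obtain j where j: "r \<le> j" "j < p" "c j \<noteq> 0" by blast
  \<comment> \<open>the quadric is affine in the middle coordinate \<open>j\<close>, so it has a zero on that axis\<close>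
  define z where "z a = (if a = j then k / (2 * c j) else 0)" for a
  have "j < n" using j \<open>p \<le> n\<close> by simp
  have "quad_form n m z = 0"
    unfolding z_def quad_form_single_coord[OF \<open>j < n\<close>] using mid[of j j] j by simp
  moreover have "(\<Sum>i<n. c i * z i) = k / 2"
    unfolding z_def using \<open>j < n\<close> j by (simp add: if_distrib cong: if_cong)
  moreover have "\<forall>i<r. z i = 0" unfolding z_def using j by auto
  ultimately show ?thesis unfolding quadric_val_def by auto
next
  case False
  let ?M = "k + (\<Sum>i\<in>{p..<n}. (c i)\<^sup>2 / m i i)"
  have square: "quadric_val n m c k z = (\<Sum>i\<in>{p..<n}. m i i * (z i + c i / m i i)\<^sup>2) - ?M"
    if "\<forall>i<r. z i = 0" for z
    using quadric_val_tail_complete_square[where m=m and c=c and z=z and k=k,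
        OF \<open>r \<le> p\<close> mid mid_tail tail_mid tail_diag tail_nonsing] False that
    by blast
  from diag_quadric_dichotomy[of "{p..<n}" "\<lambda>i. m i i" "\<lambda>i. c i / m i i" ?M]
  consider z where "\<forall>i. i \<notin> {p..<n} \<longrightarrow> z i = 0"
      "(\<Sum>i\<in>{p..<n}. m i i * (z i + c i / m i i)\<^sup>2) = ?M"
    | \<delta> where "\<delta> > 0" "\<forall>z. \<delta> \<le> \<bar>(\<Sum>i\<in>{p..<n}. m i i * (z i + c i / m i i)\<^sup>2) - ?M\<bar>"
    by auto
  then show ?thesis
  proof cases
    case 1
    then have "\<forall>i<r. z i = 0" using \<open>r \<le> p\<close> by auto
    with 1 square show ?thesis by auto
  next
    case 2
    with square show ?thesis by auto
  qed
qed

lemma objL_lsqA: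
  assumes "x \<in> carrier_vec n" "r \<le> n"
  shows "objL (lsqA n r) (0\<^sub>v n) x = (\<Sum>i<r. (x $ i)\<^sup>2)"
proof -
  have "lsqA n r \<in> carrier_mat n n" unfolding lsqA_def by simp
  then have "objL (lsqA n r) (0\<^sub>v n) x = quad_form n (\<lambda>i j. lsqA n r $$ (i, j)) (\<lambda>i. x $ i)"
    unfolding objL_def using assms(1) quad_form_scalar_prod by simp
  also have "\<dots> = (\<Sum>i<n. \<Sum>j<n. if j = i then (if i < r then (x $ i)\<^sup>2 else 0) else 0)"
    unfolding quad_form_def lsqA_def by (intro sum.cong refl) (auto simp: power2_eq_square)
  also have "\<dots> = (\<Sum>i<n. if i < r then (x $ i)\<^sup>2 else 0)"
    by simp
  also have "\<dots> = (\<Sum>i<r. if i < r then (x $ i)\<^sup>2 else 0)"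
    using assms(2) by (intro sum.mono_neutral_right) auto
  also have "\<dots> = (\<Sum>i<r. (x $ i)\<^sup>2)"
    by simp
  finally show ?thesis .
qed

lemma feasX_iff_quadric_val:
  assumes "B \<in> carrier_mat n n" "b \<in> carrier_vec n" "x \<in> carrier_vec n"
  shows "x \<in> feasX n B b k \<longleftrightarrow> quadric_val n (\<lambda>i j. B $$ (i, j)) (\<lambda>i. b $ i) k (\<lambda>i. x $ i) = 0"
proof -
  have "b \<bullet> x = (\<Sum>i<n. b $ i * x $ i)"
    using assms(3) by (simp add: scalar_prod_def atLeast0LessThan)
  then show ?thesis
    unfolding feasX_def quadric_val_def using assms quad_form_scalar_prod by simp
qed

lemma sym_if_transpose_mat_eq:
  "B \<in> carrier_mat n n \<Longrightarrow> transpose_mat B = B \<Longrightarrow> i < n \<Longrightarrow> j < n \<Longrightarrow> B $$ (i, j) = B $$ (j, i)"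
  by (metis carrier_matD index_transpose_mat(1))

lemma simplified_form_blocks:
  assumes "simplified_form n r s0 B" "r \<le> n"
  defines "p \<equiv> n - s0"
  shows "r \<le> p" "p \<le> n"
    and "\<And>i j. r \<le> i \<Longrightarrow> i < p \<Longrightarrow> r \<le> j \<Longrightarrow> j < p \<Longrightarrow> B $$ (i, j) = 0"
    and "\<And>i j. i < p \<Longrightarrow> p \<le> j \<Longrightarrow> j < n \<Longrightarrow> B $$ (i, j) = 0"
    and "\<And>i j. p \<le> i \<Longrightarrow> i < n \<Longrightarrow> j < p \<Longrightarrow> B $$ (i, j) = 0"
    and "\<And>i j. p \<le> i \<Longrightarrow> i < n \<Longrightarrow> p \<le> j \<Longrightarrow> j < n \<Longrightarrow> i \<noteq> j \<Longrightarrow> B $$ (i, j) = 0"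
    and "\<And>i. p \<le> i \<Longrightarrow> i < n \<Longrightarrow> B $$ (i, i) \<noteq> 0"
  using assms unfolding simplified_form_def by auto

lemma ess_perfect_lsqA_quadric:
  assumes "r \<le> n" "B \<in> carrier_mat n n" "b \<in> carrier_vec n" "feasX n B b k \<noteq> {}"
    and "ess_perfect n (lsqA n r) (0\<^sub>v n) B b k"
  shows "\<nexists>z. (\<forall>i<r. z i = 0) \<and> quadric_val n (\<lambda>i j. B $$ (i, j)) (\<lambda>i. b $ i) k z = 0"
    and "\<nexists>\<epsilon>. \<epsilon> > 0 \<and> (\<forall>f. quadric_val n (\<lambda>i j. B $$ (i, j)) (\<lambda>i. b $ i) k f = 0 \<longrightarrow>
      \<epsilon> \<le> (\<Sum>i<r. (f i)\<^sup>2))"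
proof -
  let ?q = "quadric_val n (\<lambda>i j. B $$ (i, j)) (\<lambda>i. b $ i) k"
  let ?L = "objL (lsqA n r) (0\<^sub>v n)"
  have L: "?L x = (\<Sum>i<r. (x $ i)\<^sup>2)" if "x \<in> carrier_vec n" for x
    using objL_lsqA[OF that assms(1)] .
  have feas: "x \<in> feasX n B b k \<longleftrightarrow> ?q (\<lambda>i. x $ i) = 0" if "x \<in> carrier_vec n" for x
    using feasX_iff_quadric_val[OF assms(2,3) that] .
  show "\<nexists>z. (\<forall>i<r. z i = 0) \<and> ?q z = 0"
  proof
    assume "\<exists>z. (\<forall>i<r. z i = 0) \<and> ?q z = 0"
    then obtain z where "\<forall>i<r. z i = 0" "?q z = 0" by blast
    have "?q (\<lambda>i. vec n z $ i) = ?q z"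
      unfolding quadric_val_def using quad_form_cong[of n "\<lambda>i. vec n z $ i" z] by simp
    then have "vec n z \<in> feasX n B b k" using feas \<open>?q z = 0\<close> by simp
    moreover have "?L (vec n z) = 0"
      unfolding L[OF vec_carrier] using \<open>\<forall>i<r. z i = 0\<close> assms(1) by (intro sum.neutral) auto
    ultimately show False using assms(5) unfolding ess_perfect_def by fastforce
  qed
  show "\<nexists>\<epsilon>. \<epsilon> > 0 \<and> (\<forall>f. ?q f = 0 \<longrightarrow> \<epsilon> \<le> (\<Sum>i<r. (f i)\<^sup>2))"
  proof
    assume "\<exists>\<epsilon>. \<epsilon> > 0 \<and> (\<forall>f. ?q f = 0 \<longrightarrow> \<epsilon> \<le> (\<Sum>i<r. (f i)\<^sup>2))"
    then obtain \<epsilon> where "\<epsilon> > 0" and far: "\<forall>f. ?q f = 0 \<longrightarrow> \<epsilon> \<le> (\<Sum>i<r. (f i)\<^sup>2)" by blast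
    have "\<epsilon> \<le> ?L x" if "x \<in> feasX n B b k" for x
      using that far feas L unfolding feasX_def by auto
    then have "\<epsilon> \<le> Inf (?L ` feasX n B b k)"
      using assms(4) by (intro cInf_greatest) auto
    then show False using assms(5) \<open>\<epsilon> > 0\<close> unfolding ess_perfect_def by simp
  qed
qed

lemma ess_perfect_imp_coupling:
  assumes "r \<le> n" "B \<in> carrier_mat n n" "transpose_mat B = B" "b \<in> carrier_vec n"
    and "simplified_form n r s0 B"
    and "feasX n B b k \<noteq> {}"
    and "ess_perfect n (lsqA n r) (0\<^sub>v n) B b k"
  shows "\<exists>i j. i < r \<and> r \<le> j \<and> j < n - s0 \<and> B $$ (i, j) \<noteq> 0"
proof (rule ccontr)
  assume uncoupled: "\<not> ?thesis"
  note blocks = simplified_form_blocks[OF assms(5,1)]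
  have cross: "B $$ (i, j) = 0" if "i < r" "r \<le> j" "j < n" for i j
    using uncoupled blocks(4)[of i j] blocks(1) that by (cases "j < n - s0") auto
  have sym: "B $$ (i, j) = B $$ (j, i)" if "i < n" "j < n" for i j
    using sym_if_transpose_mat_eq[OF assms(2,3) that] .
  from quadric_val_tail_dichotomy[where m="\<lambda>i j. B $$ (i, j)", OF blocks]
  consider "\<exists>z. (\<forall>i<r. z i = 0) \<and> quadric_val n (\<lambda>i j. B $$ (i, j)) (\<lambda>i. b $ i) k z = 0"
    | \<delta> where "\<delta> > 0"
      "\<And>z. \<forall>i<r. z i = 0 \<Longrightarrow> \<delta> \<le> \<bar>quadric_val n (\<lambda>i j. B $$ (i, j)) (\<lambda>i. b $ i) k z\<bar>"
    by blast
  then show False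
  proof cases
    case 1
    then show False using ess_perfect_lsqA_quadric(1)[OF assms(1,2,4,6,7)] by blast
  next
    case 2
    then show False
      using quadric_head_bounded_below[where m="\<lambda>i j. B $$ (i, j)", OF assms(1) cross sym]
        ess_perfect_lsqA_quadric(2)[OF assms(1,2,4,6,7)] by blast
  qed
qed

theorem corollary5p1:
  fixes n r s0 :: nat and B :: "real mat" and b :: "real vec" and k :: real
  assumes "1 \<le> r" and "r < n"
    and "B \<in> carrier_mat n n" and "transpose_mat B = B"
    and "b \<in> carrier_vec n"
    and "simplified_form n r s0 B"
    and "feasX n B b k \<noteq> {}"
    and "ess_perfect n (lsqA n r) (0\<^sub>v n) B b k"
  shows "(\<exists>p>0. eigenvalue B p) \<and> (\<exists>q<0. eigenvalue B q)"
proof -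
  have sym: "B $$ (i, j) = B $$ (j, i)" if "i < n" "j < n" for i j
    using sym_if_transpose_mat_eq[OF assms(3,4) that] .
  obtain i j where ij: "i < r" "r \<le> j" "j < n - s0" "B $$ (i, j) \<noteq> 0"
    using ess_perfect_imp_coupling[of r n B b s0 k] assms by auto
  have "i < n" "j < n" using ij assms(2) by auto
  moreover have "B $$ (j, j) = 0"
    using simplified_form_blocks(3)[OF assms(6)] ij assms(2) by simp
  ultimately obtain u v
    where "quad_form n (\<lambda>i j. B $$ (i, j)) u > 0" "quad_form n (\<lambda>i j. B $$ (i, j)) v < 0"
    using quad_form_indefinite_if_zero_diag[of n "\<lambda>i j. B $$ (i, j)", OF sym] ij(4) by blast
  then show ?thesis
    using pos_eigenvalue_if_quad_form_pos neg_eigenvalue_if_quad_form_neg assms(3) sym by blast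
qed

end
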